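(* There exists a constant $\widetilde c>0$ such that for all $N$ large enough, all $n\in\mathbb{Z}_+$ and every initial law of $X(0)$, a Markov chain $X$ on $\{0,\dots,N-4\}$ with kernel $\check P$ satisfies $$\mathbb{P}[\tau_0^X>n]\le e^{1-\widetilde c n/N^3},\qquad \tau_0^X=\inf\{n\in\mathbb{Z}_+: X(n)=0\}.$$
   Context: For $\sigma\in\mathcal{S}_N$ let $\eta_1(\sigma)$, $\eta_2(\sigma)$ be its numbers of fixed points and 2-cycles, $\nu$ the uniform measure on $\mathcal{S}_N$ and $p(x)=\mathbb{E}_\nu[\eta_2\mid\eta_1=x]$. $\check P$ is the birth–death Markov kernel on $\{0,\dots,N-4\}$ with $\check P(x,x-1)=\frac{x(N-x)}{N(N-1)}$, $\check P(x,x+1)=\frac{N-x-2p(x)}{N(N-1)}$ for $x\le N-5$, all other off-diagonal entries $0$, and diagonal entries making rows sum to 1. *)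

theory Defs
  imports "HOL-Probability.Probability" "HOL-Combinatorics.Permutations"
begin

definition perms :: "nat \<Rightarrow> (nat \<Rightarrow> nat) set" where
  "perms N = {\<sigma>. \<sigma> permutes {..<N}}"

definition eta1 :: "nat \<Rightarrow> (nat \<Rightarrow> nat) \<Rightarrow> nat" where
  "eta1 N \<sigma> = card {i \<in> {..<N}. \<sigma> i = i}"

definition eta2 :: "nat \<Rightarrow> (nat \<Rightarrow> nat) \<Rightarrow> nat" where
  "eta2 N \<sigma> = card {{i, j} | i j. i < N \<and> j < N \<and> i \<noteq> j \<and> \<sigma> i = j \<and> \<sigma> j = i}"

text \<open>p(x) = E_nu[eta2 | eta1 = x] for nu uniform on S_N
  (elementary conditional expectation; set to 0 if the conditioning event is empty).\<close>
definition pcond :: "nat \<Rightarrow> nat \<Rightarrow> real" where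
  "pcond N x = (let A = {\<sigma> \<in> perms N. eta1 N \<sigma> = x} in
      (\<Sum>\<sigma>\<in>A. real (eta2 N \<sigma>)) / real (card A))"

definition Pdown :: "nat \<Rightarrow> nat \<Rightarrow> real" where
  "Pdown N x = real x * real (N - x) / (real N * (real N - 1))"

definition Pup :: "nat \<Rightarrow> nat \<Rightarrow> real" where
  "Pup N x = (if x + 5 \<le> N then (real N - real x - 2 * pcond N x) / (real N * (real N - 1)) else 0)"

definition Pcheck :: "nat \<Rightarrow> nat \<Rightarrow> nat \<Rightarrow> real" where
  "Pcheck N x y =
     (if x \<le> N - 4 \<and> y \<le> N - 4 then
        (if 0 < x \<and> y = x - 1 then Pdown N x
         else if y = x + 1 then Pup N x
         else if y = x then 1 - (if 0 < x then Pdown N x else 0) - Pup N x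
         else 0)
      else 0)"

text \<open>surv N n x = P_x[X(0) \<noteq> 0, ..., X(n) \<noteq> 0] = P_x[tau_0 > n] for the chain with kernel Pcheck.\<close>
fun surv :: "nat \<Rightarrow> nat \<Rightarrow> nat \<Rightarrow> real" where
  "surv N 0 x = (if x = 0 then 0 else 1)"
| "surv N (Suc n) x = (if x = 0 then 0 else (\<Sum>y\<in>{0..N - 4}. Pcheck N x y * surv N n y))"

definition tail_prob :: "nat \<Rightarrow> nat pmf \<Rightarrow> nat \<Rightarrow> real" where
  "tail_prob N \<mu> n = (\<Sum>x\<in>{0..N - 4}. pmf \<mu> x * surv N n x)"

end

theory Submission
  imports Defs
begin

text \<open>
  A drift argument. On the positive states take the concave quadratic
  \<open>lyap N y = 1 + y (2N - y) / N\<^sup>2\<close>, with values in \<open>[1, 2]\<close>, and put \<open>lyap N 0 = 0\<close>.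
  The upward rate never exceeds the downward rate, which is at least \<open>1/N\<close>, and the second
  difference of \<open>lyap\<close> is at most \<open>-2/N\<^sup>2\<close>; so one step of the chain killed at \<open>0\<close> decreases
  \<open>lyap\<close> in expectation by at least \<open>2/N\<^sup>3 \<ge> lyap/N\<^sup>3\<close>. Iterating,
  \<open>P\<^sub>x[\<tau>\<^sub>0 > n] \<le> (1 - 1/N\<^sup>3)\<^sup>n lyap N x \<le> 2 exp (-n/N\<^sup>3) \<le> exp (1 - n/N\<^sup>3)\<close>,
  which is the claim with \<open>c = 1\<close>.
\<close>

lemma two_eta2_add_eta1_le: "2 * eta2 N \<sigma> + eta1 N \<sigma> \<le> N"
proof -
  define T where "T = {{i, j} | i j. i < N \<and> j < N \<and> i \<noteq> j \<and> \<sigma> i = j \<and> \<sigma> j = i}"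
  define F where "F = {i \<in> {..<N}. \<sigma> i = i}"
  have "T \<subseteq> Pow {..<N}" unfolding T_def by auto
  hence "finite T" by (meson finite_Pow_iff finite_lessThan finite_subset)
  have "\<And>P. P \<in> T \<Longrightarrow> card P = 2" by (auto simp: T_def)
  have "card (\<Union>T) = sum card T"
    by (rule card_Union_disjoint) (auto simp: T_def pairwise_def disjnt_def)
  also have "\<dots> = 2 * card T" using \<open>\<And>P. P \<in> T \<Longrightarrow> card P = 2\<close> by simp
  finally have "2 * card T = card (\<Union>T)" ..
  also have "\<dots> \<le> card ({..<N} - F)" by (rule card_mono) (auto simp: T_def F_def)
  also have "\<dots> = N - card F" by (subst card_Diff_subset) (auto simp: F_def)
  finally have "2 * card T \<le> N - card F" .
  moreover have "card F \<le> N" using card_mono[of "{..<N}" F] by (auto simp: F_def)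
  ultimately show ?thesis unfolding eta2_def eta1_def T_def[symmetric] F_def[symmetric] by simp
qed

lemma pcond_nonneg: "0 \<le> pcond N x"
  unfolding pcond_def Let_def by (auto intro!: sum_nonneg divide_nonneg_nonneg)

lemma two_pcond_le:
  assumes "x \<le> N"
  shows "2 * pcond N x \<le> real N - real x"
proof -
  define A where "A = {\<sigma> \<in> perms N. eta1 N \<sigma> = x}"
  have "finite A" unfolding A_def perms_def
    by (rule finite_subset[OF _ finite_permutations[of "{..<N}"]]) auto
  have "2 * (\<Sum>\<sigma>\<in>A. real (eta2 N \<sigma>)) \<le> (\<Sum>\<sigma>\<in>A. real N - real x)"
    unfolding sum_distrib_left
  proof (rule sum_mono)
    fix \<sigma> assume "\<sigma> \<in> A"
    then have "2 * eta2 N \<sigma> + x \<le> N" using two_eta2_add_eta1_le[of N \<sigma>] by (simp add: A_def)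
    then show "2 * real (eta2 N \<sigma>) \<le> real N - real x" by linarith
  qed
  also have "\<dots> = real (card A) * (real N - real x)" by simp
  finally show ?thesis
    using assms \<open>finite A\<close> unfolding pcond_def Let_def A_def[symmetric]
    by (cases "A = {}") (auto simp: field_simps card_gt_0_iff)
qed

lemma Pdown_ge:
  assumes "0 < x" "x < N"
  shows "1 / real N \<le> Pdown N x"
proof -
  have "real N - 1 \<le> real x * (real N - real x)"
    using assms mult_nonneg_nonneg[of "real x - 1" "real N - real x - 1"]
    by (simp add: algebra_simps)
  then have "(real N - 1) / (real N * (real N - 1)) \<le> Pdown N x"
    unfolding Pdown_def using assms by (intro divide_right_mono) (auto simp: of_nat_diff)
  moreover have "(real N - 1) / (real N * (real N - 1)) = 1 / real N"
    using assms by simp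
  ultimately show ?thesis by simp
qed

lemma Pup_nonneg:
  assumes "x \<le> N"
  shows "0 \<le> Pup N x"
  using two_pcond_le[OF assms] by (simp add: Pup_def)

lemma Pup_le:
  assumes "x \<le> N"
  shows "Pup N x \<le> (real N - real x) / (real N * (real N - 1))"
proof -
  have "0 \<le> real N * (real N - 1)" by (cases N) auto
  then show ?thesis using assms pcond_nonneg[of N x] by (auto simp: Pup_def divide_right_mono)
qed

lemma Pup_le_Pdown:
  assumes "0 < x" "x \<le> N"
  shows "Pup N x \<le> Pdown N x"
proof -
  have "real N - real x \<le> real x * (real N - real x)"
    using assms mult_right_mono[of 1 "real x" "real N - real x"] by simp
  then have "(real N - real x) / (real N * (real N - 1)) \<le> Pdown N x"
    using assms unfolding Pdown_def by (simp add: of_nat_diff divide_right_mono)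
  then show ?thesis using Pup_le[OF assms(2)] by linarith
qed

lemma Pdown_add_Pup_le_1:
  assumes "0 < x" "x < N"
  shows "Pdown N x + Pup N x \<le> 1"
proof -
  have "real x * (real N - real x) + (real N - real x) = (real x + 1) * (real N - real x)"
    by (simp add: algebra_simps)
  also have "\<dots> \<le> real N * (real N - 1)" using assms by (intro mult_mono) auto
  finally have "(real x * (real N - real x) + (real N - real x)) / (real N * (real N - 1)) \<le> 1"
    using assms by simp
  then show ?thesis
    using Pup_le[of x N] assms unfolding Pdown_def by (simp add: of_nat_diff add_divide_distrib)
qed

lemma Pcheck_nonneg:
  assumes "0 < x" "x \<le> N - 4"
  shows "0 \<le> Pcheck N x y"
proof -
  have "x < N" using assms by simp
  then show ?thesis
    using assms Pup_nonneg[of x N] Pup_le_Pdown[of x N] Pdown_add_Pup_le_1[of x N]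
    unfolding Pcheck_def by auto
qed

text \<open>From a positive state the kernel is a three-point law; at the top state \<open>N - 4\<close> the upward
  weight vanishes, so it does not matter that \<open>x + 1\<close> leaves the state space.\<close>
lemma sum_Pcheck:
  assumes "0 < x" "x \<le> N - 4"
  shows "(\<Sum>y\<in>{0..N - 4}. Pcheck N x y * f y) =
     Pdown N x * f (x - 1) + (1 - Pdown N x - Pup N x) * f x + Pup N x * f (x + 1)"
proof -
  have "(\<Sum>y\<in>{0..N - 4}. Pcheck N x y * f y) =
     (\<Sum>y\<in>{0..N - 4}. (if y = x - 1 then Pdown N x * f y else 0)
       + (if y = x then (1 - Pdown N x - Pup N x) * f y else 0)
       + (if y = x + 1 then Pup N x * f y else 0))"
    by (rule sum.cong) (use assms in \<open>auto simp: Pcheck_def\<close>)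
  also have "\<dots> = Pdown N x * f (x - 1) + (1 - Pdown N x - Pup N x) * f x
      + (if x + 1 \<le> N - 4 then Pup N x * f (x + 1) else 0)"
    using assms by (simp add: sum.distrib)
  also have "\<dots> = Pdown N x * f (x - 1) + (1 - Pdown N x - Pup N x) * f x + Pup N x * f (x + 1)"
    using assms by (auto simp: Pup_def)
  finally show ?thesis .
qed

definition lyap :: "nat \<Rightarrow> nat \<Rightarrow> real" where
  "lyap N y = (if y = 0 then 0 else 1 + real y * (2 * real N - real y) / real N ^ 2)"

lemma lyap_le_2: "lyap N y \<le> 2"
proof -
  have "real y * (2 * real N - real y) \<le> real N ^ 2"
    using zero_le_power2[of "real N - real y"] by (simp add: power2_eq_square algebra_simps)
  then have "real y * (2 * real N - real y) / real N ^ 2 \<le> 1"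
    by (cases "N = 0") auto
  then show ?thesis by (simp add: lyap_def)
qed

lemma lyap_ge_1:
  assumes "0 < y" "y \<le> N"
  shows "1 \<le> lyap N y"
  using assms by (simp add: lyap_def)

lemma lyap_up_diff:
  assumes "0 < x" "0 < N"
  shows "lyap N (x + 1) - lyap N x = (2 * real N - 2 * real x - 1) / real N ^ 2"
  using assms by (simp add: lyap_def field_simps power2_eq_square)

lemma lyap_down_diff_le:
  assumes "0 < x" "x < N"
  shows "lyap N (x - 1) - lyap N x \<le> - (2 / real N ^ 2)"
proof (cases "x = 1")
  case True
  have "2 * 1 \<le> real N * real N" using assms by (intro mult_mono) auto
  then have "2 / real N ^ 2 \<le> 1" by (simp add: power2_eq_square)
  moreover have "lyap N (x - 1) = 0" using True by (simp add: lyap_def)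
  ultimately show ?thesis using lyap_ge_1[of x N] assms by linarith
next
  case False
  then have "lyap N (x - 1) - lyap N x = - (2 * real N - 2 * real x + 1) / real N ^ 2"
    using assms by (simp add: lyap_def of_nat_diff field_simps power2_eq_square)
  moreover have "- (2 * real N - 2 * real x + 1) / real N ^ 2 \<le> - 2 / real N ^ 2"
    using assms by (intro divide_right_mono) auto
  ultimately show ?thesis by simp
qed

lemma lyap_second_diff_le:
  assumes "0 < x" "0 < N"
  shows "(lyap N (x + 1) - lyap N x) + (lyap N (x - 1) - lyap N x) \<le> - (2 / real N ^ 2)"
proof (cases "x = 1")
  case True
  then have "(lyap N (x + 1) - lyap N x) + (lyap N (x - 1) - lyap N x)
      = - 1 - 2 / real N ^ 2"
    using lyap_up_diff[OF assms] assms by (simp add: lyap_def field_simps power2_eq_square)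
  then show ?thesis by simp
next
  case False
  then show ?thesis
    using assms by (simp add: lyap_def of_nat_diff field_simps power2_eq_square)
qed

lemma weighted_increments_le:
  fixes u d a b c :: real
  assumes "0 \<le> u" "u \<le> d" "a + b \<le> - c" "b \<le> - c"
  shows "u * a + d * b \<le> - c * d"
proof (cases "0 \<le> a")
  case True
  have "u * a \<le> d * a" using assms True by (simp add: mult_right_mono)
  then have "u * a + d * b \<le> d * (a + b)" by (simp add: distrib_left)
  also have "\<dots> \<le> - c * d" using assms mult_left_mono[of "a + b" "- c" d] by (simp add: mult.commute)
  finally show ?thesis .
next
  case False
  then show ?thesis using assms mult_left_mono[of b "- c" d] mult_nonneg_nonpos[of u a]
    by (simp add: mult.commute)
qed

lemma lyap_drift:
  assumes "0 < x" "x \<le> N - 4"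
  shows "(\<Sum>y\<in>{0..N - 4}. Pcheck N x y * lyap N y) \<le> (1 - 1 / real N ^ 3) * lyap N x"
proof -
  define d u where "d = Pdown N x" and "u = Pup N x"
  have "u * (lyap N (x + 1) - lyap N x) + d * (lyap N (x - 1) - lyap N x) \<le> - (2 / real N ^ 2) * d"
    using assms Pup_nonneg[of x N] Pup_le_Pdown[of x N]
    by (intro weighted_increments_le lyap_second_diff_le lyap_down_diff_le) (auto simp: d_def u_def)
  also have "\<dots> \<le> - (2 / real N ^ 2) * (1 / real N)"
    using assms Pdown_ge[of x N] by (intro mult_left_mono_neg) (auto simp: d_def)
  also have "\<dots> \<le> - lyap N x / real N ^ 3"
    using lyap_le_2[of N x] by (simp add: power3_eq_cube power2_eq_square divide_right_mono)
  finally have "u * (lyap N (x + 1) - lyap N x) + d * (lyap N (x - 1) - lyap N x) \<le> - lyap N x / real N ^ 3" .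
  then show ?thesis
    using sum_Pcheck[OF assms, of "lyap N"] by (simp add: d_def u_def algebra_simps)
qed

lemma surv_le_lyap:
  assumes "0 < N" "x \<le> N - 4"
  shows "surv N n x \<le> (1 - 1 / real N ^ 3) ^ n * lyap N x"
  using assms(2)
proof (induction n arbitrary: x)
  case 0
  then show ?case using lyap_ge_1[of x N] by (auto simp: lyap_def)
next
  case (Suc n)
  define r where "r = 1 - 1 / real N ^ 3"
  have "0 \<le> r" using assms by (simp add: r_def)
  show ?case
  proof (cases "x = 0")
    case True
    then show ?thesis by (simp add: lyap_def)
  next
    case False
    then have x: "0 < x" "x \<le> N - 4" using Suc.prems by auto
    have "surv N (Suc n) x = (\<Sum>y\<in>{0..N - 4}. Pcheck N x y * surv N n y)"
      using False by simp
    also have "\<dots> \<le> (\<Sum>y\<in>{0..N - 4}. Pcheck N x y * (r ^ n * lyap N y))"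
      by (intro sum_mono mult_left_mono) (use Suc.IH Pcheck_nonneg[OF x] in \<open>auto simp: r_def\<close>)
    also have "\<dots> = r ^ n * (\<Sum>y\<in>{0..N - 4}. Pcheck N x y * lyap N y)"
      by (simp add: sum_distrib_left algebra_simps)
    also have "\<dots> \<le> r ^ n * (r * lyap N x)"
      using lyap_drift[OF x] \<open>0 \<le> r\<close> by (simp add: r_def mult_left_mono)
    finally show ?thesis by (simp add: r_def ac_simps)
  qed
qed

lemma surv_le_exp:
  assumes "0 < N" "x \<le> N - 4"
  shows "surv N n x \<le> exp (1 - real n / real N ^ 3)"
proof -
  define r where "r = 1 - 1 / real N ^ 3"
  have "0 \<le> r" using assms by (simp add: r_def)
  have "r ^ n \<le> exp (- (1 / real N ^ 3)) ^ n"
    using \<open>0 \<le> r\<close> unfolding r_def by (intro power_mono exp_minus_ge)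
  also have "\<dots> = exp (- (real n / real N ^ 3))" by (simp flip: exp_of_nat_mult)
  finally have decay: "r ^ n \<le> exp (- (real n / real N ^ 3))" .
  have "surv N n x \<le> r ^ n * lyap N x" using surv_le_lyap[OF assms] by (simp add: r_def)
  also have "\<dots> \<le> r ^ n * 2" using lyap_le_2[of N x] \<open>0 \<le> r\<close> by (simp add: mult_left_mono)
  also have "\<dots> \<le> exp (- (real n / real N ^ 3)) * exp 1"
    using decay exp_ge_add_one_self[of 1] \<open>0 \<le> r\<close> by (intro mult_mono) auto
  also have "\<dots> = exp (1 - real n / real N ^ 3)" by (simp flip: exp_add)
  finally show ?thesis .
qed

theorem lemma5p8:
  shows "\<exists>c::real. c > 0 \<and> (\<exists>N0::nat. \<forall>N\<ge>N0. \<forall>n::nat. \<forall>\<mu>::nat pmf.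
           set_pmf \<mu> \<subseteq> {0..N - 4} \<longrightarrow>
           tail_prob N \<mu> n \<le> exp (1 - c * real n / real N ^ 3))"
proof (intro exI[of _ 1] conjI exI[of _ 1] allI impI)
  fix N n and \<mu> :: "nat pmf"
  assume "1 \<le> N" and \<mu>: "set_pmf \<mu> \<subseteq> {0..N - 4}"
  have "tail_prob N \<mu> n \<le> (\<Sum>x\<in>{0..N - 4}. pmf \<mu> x * exp (1 - real n / real N ^ 3))"
    unfolding tail_prob_def using \<open>1 \<le> N\<close>
    by (intro sum_mono mult_left_mono surv_le_exp) auto
  also have "\<dots> = exp (1 - real n / real N ^ 3)"
    using sum_pmf_eq_1[OF _ \<mu>] by (simp flip: sum_distrib_right)
  finally show "tail_prob N \<mu> n \<le> exp (1 - 1 * real n / real N ^ 3)" by simp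
qed simp

end
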